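(* Let $M>0$, $q,Q,\alpha,\beta\in\mathbb{R}$, let $\mathbf{n}\in\mathbb{R}^3$ be a constant unit vector, and let $U=\{\mathbf{x}\in\mathbb{R}^3\setminus\{0\}:\alpha\,\mathbf{x}\cdot\mathbf{n}+\beta>0\}$. On $\{(\mathbf{x},\boldsymbol{\Pi}):\mathbf{x}\in U,\ \boldsymbol{\Pi}\in\mathbb{R}^3\}$ consider the bracket $$\{P,R\}=\sum_i\Big(\frac{\partial P}{\partial x^i}\frac{\partial R}{\partial \Pi_i}-\frac{\partial P}{\partial \Pi_i}\frac{\partial R}{\partial x^i}\Big)+q\sum_{i,j}F_{ij}\frac{\partial P}{\partial \Pi_i}\frac{\partial R}{\partial \Pi_j},\qquad F_{ij}=\epsilon_{ijk}B^k,$$ where $\mathbf{B}(\mathbf{x})=\dfrac{\alpha}{\sqrt{\alpha\,\mathbf{x}\cdot\mathbf{n}+\beta}}\,\mathbf{n}$. Let $$H=\frac{\boldsymbol{\Pi}^2}{2M}+\frac{qQ}{r},\qquad r=|\mathbf{x}|,\qquad \mathbf{L}=\mathbf{x}\times\boldsymbol{\Pi},\qquad \mathbf{K}_2=\boldsymbol{\Pi}\times\mathbf{L}+MqQ\,\frac{\mathbf{x}}{r}.$$ Then the function $$K=\mathbf{n}\cdot\Big[\mathbf{K}_2+2q\sqrt{\alpha\,\mathbf{x}\cdot\mathbf{n}+\beta}\;\mathbf{L}\Big]+\alpha q^2\,(\mathbf{x}\times\mathbf{n})^2$$ satisfies $\{K,H\}=0$ identically.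
   Context: $\epsilon_{ijk}$ is the Levi-Civita symbol and indices are raised and lowered with the Euclidean metric $\delta_{ij}$. The variables $\Pi_i$ are the gauge-covariant (kinetic) momenta and the bracket above is the gauge-covariant Poisson bracket ($\{\Pi_i,\Pi_j\}=qF_{ij}$). This models a charge $q$ of mass $M$ in the Coulomb potential of a charge $Q$ superposed with a magnetic field directed along the fixed vector $\mathbf{n}$. *)

theory Defs
  imports "HOL-Analysis.Analysis"
begin

definition levi_civita :: "3 \<Rightarrow> 3 \<Rightarrow> 3 \<Rightarrow> real" where
  "levi_civita i j k =
     (if (i, j, k) \<in> {(1,2,3), (2,3,1), (3,1,2)} then 1
      else if (i, j, k) \<in> {(1,3,2), (3,2,1), (2,1,3)} then -1 else 0)"

definition pdx :: "(real^3 \<Rightarrow> real^3 \<Rightarrow> real) \<Rightarrow> 3 \<Rightarrow> real^3 \<Rightarrow> real^3 \<Rightarrow> real" where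
  "pdx P i x p = deriv (\<lambda>t. P (x + t *\<^sub>R axis i 1) p) 0"

definition pdp :: "(real^3 \<Rightarrow> real^3 \<Rightarrow> real) \<Rightarrow> 3 \<Rightarrow> real^3 \<Rightarrow> real^3 \<Rightarrow> real" where
  "pdp P i x p = deriv (\<lambda>t. P x (p + t *\<^sub>R axis i 1)) 0"

definition Bfield :: "real \<Rightarrow> real \<Rightarrow> real^3 \<Rightarrow> real^3 \<Rightarrow> real^3" where
  "Bfield \<alpha> \<beta> n x = (\<alpha> / sqrt (\<alpha> * (x \<bullet> n) + \<beta>)) *\<^sub>R n"

definition Ffield :: "real \<Rightarrow> real \<Rightarrow> real^3 \<Rightarrow> real^3 \<Rightarrow> 3 \<Rightarrow> 3 \<Rightarrow> real" where
  "Ffield \<alpha> \<beta> n x i j = (\<Sum>k\<in>UNIV. levi_civita i j k * (Bfield \<alpha> \<beta> n x $ k))"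

definition pbracket :: "real \<Rightarrow> real \<Rightarrow> real \<Rightarrow> real^3 \<Rightarrow>
    (real^3 \<Rightarrow> real^3 \<Rightarrow> real) \<Rightarrow> (real^3 \<Rightarrow> real^3 \<Rightarrow> real) \<Rightarrow> real^3 \<Rightarrow> real^3 \<Rightarrow> real" where
  "pbracket q \<alpha> \<beta> n P R x p =
     (\<Sum>i\<in>UNIV. pdx P i x p * pdp R i x p - pdp P i x p * pdx R i x p)
     + q * (\<Sum>i\<in>UNIV. \<Sum>j\<in>UNIV. Ffield \<alpha> \<beta> n x i j * pdp P i x p * pdp R j x p)"

definition Ham :: "real \<Rightarrow> real \<Rightarrow> real \<Rightarrow> real^3 \<Rightarrow> real^3 \<Rightarrow> real" where
  "Ham M q Q x p = (p \<bullet> p) / (2 * M) + q * Q / norm x"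

definition angmom :: "real^3 \<Rightarrow> real^3 \<Rightarrow> real^3" where
  "angmom x p = cross3 x p"

definition K2 :: "real \<Rightarrow> real \<Rightarrow> real \<Rightarrow> real^3 \<Rightarrow> real^3 \<Rightarrow> real^3" where
  "K2 M q Q x p = cross3 p (angmom x p) + (M * q * Q / norm x) *\<^sub>R x"

definition Kint :: "real \<Rightarrow> real \<Rightarrow> real \<Rightarrow> real \<Rightarrow> real \<Rightarrow> real^3 \<Rightarrow> real^3 \<Rightarrow> real^3 \<Rightarrow> real" where
  "Kint M q Q \<alpha> \<beta> n x p =
     n \<bullet> (K2 M q Q x p + (2 * q * sqrt (\<alpha> * (x \<bullet> n) + \<beta>)) *\<^sub>R angmom x p)
     + \<alpha> * q^2 * (cross3 x n \<bullet> cross3 x n)"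

definition domU :: "real \<Rightarrow> real \<Rightarrow> real^3 \<Rightarrow> (real^3) set" where
  "domU \<alpha> \<beta> n = {x. x \<noteq> 0 \<and> \<alpha> * (x \<bullet> n) + \<beta> > 0}"

end

theory Submission
  imports Defs
begin

(* The bracket {P,R} only involves first partial derivatives of P and R,
   so it is determined by the gradients of P and R with respect to x and to Pi.
   Writing B for the magnetic field, contracting F_ij = eps_ijk B^k with two vectors
   gives a triple product, hence
     {P,R} = grad_x P . grad_Pi R - grad_Pi P . grad_x R + q B . (grad_Pi P x grad_Pi R). *)

lemma deriv_along_gradient:
  assumes "GDERIV f x :> g"
  shows "deriv (\<lambda>t. f (x + t *\<^sub>R v)) 0 = v \<bullet> g"
proof -
  have line: "((\<lambda>t. x + t *\<^sub>R v) has_derivative (\<lambda>t. t *\<^sub>R v)) (at 0)"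
    by (auto intro!: derivative_eq_intros)
  have "(f has_derivative (\<lambda>h. h \<bullet> g)) (at (x + 0 *\<^sub>R v))"
    using assms by (simp add: gderiv_def)
  from has_derivative_compose[OF line this]
  have "((\<lambda>t. f (x + t *\<^sub>R v)) has_field_derivative v \<bullet> g) (at 0)"
    unfolding has_field_derivative_def by (rule has_derivative_eq_rhs) (simp add: fun_eq_iff)
  then show ?thesis
    by (rule DERIV_imp_deriv)
qed

lemma pdx_gradient:
  assumes "GDERIV (\<lambda>y. P y p) x :> g"
  shows "pdx P i x p = g $ i"
  using deriv_along_gradient[OF assms, of "axis i 1"] by (simp add: pdx_def inner_axis')

lemma pdp_gradient:
  assumes "GDERIV (P x) p :> g"
  shows "pdp P i x p = g $ i"
  using deriv_along_gradient[OF assms, of "axis i 1"] by (simp add: pdp_def inner_axis')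

lemma pbracket_gradients:
  assumes "GDERIV (\<lambda>y. P y p) x :> Px" "GDERIV (P x) p :> Pp"
    and "GDERIV (\<lambda>y. R y p) x :> Rx" "GDERIV (R x) p :> Rp"
  shows "pbracket q \<alpha> \<beta> n P R x p = Px \<bullet> Rp - Pp \<bullet> Rx + q * (Bfield \<alpha> \<beta> n x \<bullet> cross3 Pp Rp)"
  unfolding pbracket_def Ffield_def levi_civita_def
    pdx_gradient[where P=P, OF assms(1)] pdp_gradient[where P=P, OF assms(2)]
    pdx_gradient[where P=R, OF assms(3)] pdp_gradient[where P=R, OF assms(4)]
  by (simp add: sum_3 cross3_simps inner_vec_def)

lemma Ham_grad_x:
  assumes "x \<noteq> 0"
  shows "GDERIV (\<lambda>y. Ham M q Q y p) x :> (- q * Q / norm x ^ 3) *\<^sub>R x"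
  unfolding gderiv_def Ham_def
  apply (rule has_derivative_eq_rhs)
   apply (rule derivative_eq_intros has_derivative_norm[OF assms] refl)+
  using assms by (auto simp: sgn_div_norm inner_commute field_simps power3_eq_cube)

lemma Ham_grad_p:
  assumes "M \<noteq> 0"
  shows "GDERIV (Ham M q Q x) p :> (1 / M) *\<^sub>R p"
  unfolding gderiv_def Ham_def
  apply (rule has_derivative_eq_rhs)
   apply (rule derivative_eq_intros refl)+
  using assms by (auto simp: inner_commute field_simps)

(* K written with scalar products only, after expanding the double cross product
   Pi x (x x Pi) and the square (x x n)^2; this is the form we differentiate. *)
lemma Kint_explicit:
  "Kint M q Q \<alpha> \<beta> n x p = (n \<bullet> x) * (p \<bullet> p) - (n \<bullet> p) * (p \<bullet> x) + M * q * Q * (n \<bullet> x) / norm x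
     + 2 * q * sqrt (\<alpha> * (x \<bullet> n) + \<beta>) * (x \<bullet> cross3 p n)
     + \<alpha> * q\<^sup>2 * ((x \<bullet> x) * (n \<bullet> n) - (x \<bullet> n)\<^sup>2)"
  unfolding Kint_def K2_def angmom_def
  by (simp add: cross3_simps power2_eq_square add_divide_distrib)

definition K_grad_x :: "real \<Rightarrow> real \<Rightarrow> real \<Rightarrow> real \<Rightarrow> real \<Rightarrow> real^3 \<Rightarrow> real^3 \<Rightarrow> real^3 \<Rightarrow> real^3" where
  "K_grad_x M q Q \<alpha> \<beta> n x p =
     (p \<bullet> p) *\<^sub>R n - (n \<bullet> p) *\<^sub>R p
     + (M * q * Q / norm x) *\<^sub>R n - (M * q * Q * (x \<bullet> n) / norm x ^ 3) *\<^sub>R x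
     + (2 * q * sqrt (\<alpha> * (x \<bullet> n) + \<beta>)) *\<^sub>R cross3 p n
     + (q * \<alpha> * (x \<bullet> cross3 p n) / sqrt (\<alpha> * (x \<bullet> n) + \<beta>)) *\<^sub>R n
     + (2 * \<alpha> * q\<^sup>2) *\<^sub>R ((n \<bullet> n) *\<^sub>R x - (x \<bullet> n) *\<^sub>R n)"

definition K_grad_p :: "real \<Rightarrow> real \<Rightarrow> real \<Rightarrow> real^3 \<Rightarrow> real^3 \<Rightarrow> real^3 \<Rightarrow> real^3" where
  "K_grad_p q \<alpha> \<beta> n x p =
     (2 * (n \<bullet> x)) *\<^sub>R p - (p \<bullet> x) *\<^sub>R n - (n \<bullet> p) *\<^sub>R x
     + (2 * q * sqrt (\<alpha> * (x \<bullet> n) + \<beta>)) *\<^sub>R cross3 n x"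

(* Differentiating the explicit form of K in x: the derivative of 1/|x| uses
   grad |x| = x/|x|, that of the sqrt-factor gives the term proportional to n. *)
lemma Kint_grad_x:
  assumes x0: "x \<noteq> 0" and pos: "\<alpha> * (x \<bullet> n) + \<beta> > 0"
  shows "GDERIV (\<lambda>y. Kint M q Q \<alpha> \<beta> n y p) x :> K_grad_x M q Q \<alpha> \<beta> n x p"
proof -
  have nx: "norm x \<noteq> 0" using x0 by simp
  show ?thesis
    unfolding gderiv_def Kint_explicit
    apply (rule has_derivative_eq_rhs)
     apply (rule derivative_eq_intros has_derivative_norm[OF x0] nx pos refl)+
    using nx pos
    by (simp add: fun_eq_iff K_grad_x_def sgn_div_norm inner_add_right inner_diff_right inner_commute
        field_simps power3_eq_cube power2_eq_square)
qed

(* Cyclic invariance of the scalar triple product, used to make K visibly linear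
   in Pi in its sqrt-term. *)
lemma triple_product: "x \<bullet> cross3 p n = p \<bullet> cross3 n x"
  by (simp add: cross3_simps)

(* K is a quadratic polynomial in Pi, so its momentum gradient needs no side conditions. *)
lemma Kint_grad_p:
  shows "GDERIV (Kint M q Q \<alpha> \<beta> n x) p :> K_grad_p q \<alpha> \<beta> n x p"
  unfolding gderiv_def Kint_explicit triple_product[of x _ n]
  apply (rule has_derivative_eq_rhs)
   apply (rule derivative_eq_intros refl)+
  by (simp add: fun_eq_iff K_grad_p_def inner_add_right inner_diff_right inner_commute algebra_simps)

(* The three scalar products are computed separately; the
   remaining identity is rational in r = |x| and s = sqrt(alpha x.n + beta). *)
lemma bracket_cancellation:
  assumes x0: "x \<noteq> 0" and pos: "\<alpha> * (x \<bullet> n) + \<beta> > 0" and M0: "M \<noteq> 0"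
  shows "K_grad_x M q Q \<alpha> \<beta> n x p \<bullet> ((1 / M) *\<^sub>R p)
       - K_grad_p q \<alpha> \<beta> n x p \<bullet> ((- q * Q / norm x ^ 3) *\<^sub>R x)
       + q * (Bfield \<alpha> \<beta> n x \<bullet> cross3 (K_grad_p q \<alpha> \<beta> n x p) ((1 / M) *\<^sub>R p)) = 0"
proof -
  define r where "r = norm x"
  define s where "s = sqrt (\<alpha> * (x \<bullet> n) + \<beta>)"
  have r: "r > 0" and rr: "x \<bullet> x = r * r"
    using x0 by (simp_all add: r_def dot_square_norm power2_eq_square)
  have s: "s > 0" using pos by (simp add: s_def)
  have Kx_p: "K_grad_x M q Q \<alpha> \<beta> n x p \<bullet> p
      = M * q * Q * (n \<bullet> p) / r - M * q * Q * (x \<bullet> n) * (x \<bullet> p) / r ^ 3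
        + q * \<alpha> * (x \<bullet> cross3 p n) * (n \<bullet> p) / s
        + 2 * \<alpha> * q\<^sup>2 * ((n \<bullet> n) * (x \<bullet> p) - (x \<bullet> n) * (n \<bullet> p))"
    unfolding K_grad_x_def r_def[symmetric] s_def[symmetric]
    by (simp add: inner_add_left inner_diff_left inner_diff_right dot_cross_self inner_commute algebra_simps)
  have Kp_x: "K_grad_p q \<alpha> \<beta> n x p \<bullet> x = (x \<bullet> n) * (x \<bullet> p) - (n \<bullet> p) * (r * r)"
    unfolding K_grad_p_def s_def[symmetric] rr[symmetric]
    by (simp add: inner_add_left inner_diff_left dot_cross_self inner_commute algebra_simps)
  have n_Kp_p: "n \<bullet> cross3 (K_grad_p q \<alpha> \<beta> n x p) p
      = - (n \<bullet> p) * (x \<bullet> cross3 p n) + 2 * q * s * ((x \<bullet> n) * (n \<bullet> p) - (n \<bullet> n) * (x \<bullet> p))"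
    unfolding K_grad_p_def s_def[symmetric] by (simp add: cross3_simps)
  show ?thesis
    unfolding Bfield_def s_def[symmetric] r_def[symmetric]
    using r s M0 by (simp add: inner_scaleR_right inner_scaleR_left cross_mult_right Kx_p Kp_x n_Kp_p
        field_simps power3_eq_cube power2_eq_square)
qed

theorem mainTheorem3:
  fixes M q Q \<alpha> \<beta> :: real and n x p :: "real^3"
  assumes "M > 0" and "norm n = 1" and "x \<in> domU \<alpha> \<beta> n"
  shows "pbracket q \<alpha> \<beta> n (Kint M q Q \<alpha> \<beta> n) (Ham M q Q) x p = 0"
proof -
  have x0: "x \<noteq> 0" and pos: "\<alpha> * (x \<bullet> n) + \<beta> > 0"
    using assms(3) by (auto simp: domU_def)
  have M0: "M \<noteq> 0" using assms(1) by simp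
  have "pbracket q \<alpha> \<beta> n (Kint M q Q \<alpha> \<beta> n) (Ham M q Q) x p
      = K_grad_x M q Q \<alpha> \<beta> n x p \<bullet> ((1 / M) *\<^sub>R p)
       - K_grad_p q \<alpha> \<beta> n x p \<bullet> ((- q * Q / norm x ^ 3) *\<^sub>R x)
       + q * (Bfield \<alpha> \<beta> n x \<bullet> cross3 (K_grad_p q \<alpha> \<beta> n x p) ((1 / M) *\<^sub>R p))"
    by (rule pbracket_gradients[OF Kint_grad_x[OF x0 pos] Kint_grad_p Ham_grad_x[OF x0] Ham_grad_p[OF M0]])
  also have "\<dots> = 0"
    by (rule bracket_cancellation[OF x0 pos M0])
  finally show ?thesis .
qed

end
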